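(* Let $x\in\mathbb{R}\setminus\mathbb{Q}$. Then $\gamma_R(x)=\tau_R(2x)$, where for an irrational $y$ \[\tau_R(y)=\sup\Big\{\tau : |y-\tfrac{p}{q}|<q^{-\tau} \text{ for infinitely many irreducible rationals } \tfrac{p}{q} \text{ with } p,q \text{ not both odd}\Big\},\] \[\gamma_R(y)=\sup\Big\{\gamma : |y-\tfrac{p}{q}|<q^{-\gamma} \text{ for infinitely many irreducible rationals } \tfrac{p}{q} \text{ with } q\equiv0,1,3 \pmod 4\Big\}.\]
   Context: Irreducible rationals $p/q$ are written with $q\ge1$ and $\gcd(p,q)=1$. *)

theory Defs
  imports "HOL-Analysis.Analysis" "HOL-Library.Extended_Real"
begin

definition good_approx :: "(int \<Rightarrow> int \<Rightarrow> bool) \<Rightarrow> real \<Rightarrow> real \<Rightarrow> (int \<times> int) set" where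
  "good_approx P y t = {(p, q). q \<ge> 1 \<and> coprime p q \<and> P p q \<and>
      \<bar>y - real_of_int p / real_of_int q\<bar> < real_of_int q powr (- t)}"

definition tau_R :: "real \<Rightarrow> ereal" where
  "tau_R y = Sup (ereal ` {t. infinite (good_approx (\<lambda>p q. \<not> (odd p \<and> odd q)) y t)})"

definition gamma_R :: "real \<Rightarrow> ereal" where
  "gamma_R y = Sup (ereal ` {t. infinite (good_approx (\<lambda>p q. q mod 4 \<in> {0, 1, 3}) y t)})"

end

theory Submission
  imports Defs
begin

text \<open>The reduced form of twice a fraction p/q with q mod 4 in {0,1,3} is 2p/q or p/(q/2),
  which has p, q not both odd; conversely halving a fraction with p, q not both odd gives
  (p/2)/q or p/(2q), whose denominator is odd or divisible by 4.  Both maps are injective on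
  reduced fractions, scale the error of approximation by a constant and change the denominator
  by a factor of at most 2; such bounded distortions lose an arbitrarily small amount of
  exponent, so the two suprema agree.\<close>

lemma Sup_ereal_image_le_if_lower_mem:
  fixes A B :: "real set"
  assumes "\<And>t t'. t \<in> A \<Longrightarrow> t' < t \<Longrightarrow> t' \<in> B"
  shows "Sup (ereal ` A) \<le> Sup (ereal ` B)"
proof (rule Sup_least)
  fix z assume "z \<in> ereal ` A"
  then obtain t where t: "t \<in> A" "z = ereal t" by auto
  show "z \<le> Sup (ereal ` B)"
  proof (rule ereal_le_epsilon2)
    fix e :: real assume "0 < e"
    then have "ereal (t - e) \<le> Sup (ereal ` B)"
      using assms t by (simp add: SUP_upper)
    then have "ereal (t - e) + ereal e \<le> Sup (ereal ` B) + ereal e"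
      by (rule add_right_mono)
    then show "z \<le> Sup (ereal ` B) + ereal e" using t by simp
  qed
qed

lemma finite_good_approx_denominator_le:
  "finite {(p, q) \<in> good_approx P y t. q \<le> N}"
proof -
  let ?S = "\<Union>q\<in>{1..N}. {\<lfloor>q * y - q * q powr (-t)\<rfloor> .. \<lceil>q * y + q * q powr (-t)\<rceil>} \<times> {q}"
  have "{(p, q) \<in> good_approx P y t. q \<le> N} \<subseteq> ?S"
  proof clarify
    fix p q assume pq: "(p, q) \<in> good_approx P y t" "q \<le> N"
    then have q1: "q \<ge> 1" and err: "\<bar>y - p / q\<bar> < q powr (- t)"
      by (auto simp: good_approx_def)
    have "\<bar>q * y - p\<bar> = q * \<bar>y - p / q\<bar>"
      using q1 by (simp add: abs_mult_pos' right_diff_distrib)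
    also have "\<dots> \<le> q * q powr (-t)" using err q1 by simp
    finally have "\<bar>q * y - p\<bar> \<le> q * q powr (-t)" .
    then show "(p, q) \<in> ?S"
      using q1 pq(2) by (auto simp: floor_le_iff le_ceiling_iff)
  qed
  moreover have "finite ?S" by auto
  ultimately show ?thesis by (rule finite_subset)
qed

lemma reduced_fraction_eqD:
  fixes p q p' q' :: int
  assumes "q \<ge> 1" "q' \<ge> 1" "coprime p q" "coprime p' q'"
    and "real_of_int p / real_of_int q = real_of_int p' / real_of_int q'"
  shows "p = p' \<and> q = q'"
proof -
  have "real_of_int (p * q') = real_of_int (q * p')"
    using assms by (simp add: field_simps)
  then have "p * q' = q * p'" by (simp only: of_int_eq_iff)
  with assms show ?thesis by (simp add: coprime_crossproduct')
qed

lemma powr_neg_le_of_comparable: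
  fixes q q' a s :: real
  assumes "q > 0" "q' > 0" "a \<ge> 1" "q' \<le> a * q" "q \<le> a * q'"
  shows "a powr (-\<bar>s\<bar>) * q powr (-s) \<le> q' powr (-s)"
proof (cases "s \<ge> 0")
  case True
  have "(a * q) powr (-s) \<le> q' powr (-s)"
    by (rule powr_mono2') (use assms True in auto)
  then show ?thesis using True assms by (simp add: powr_mult)
next
  case False
  have "(q / a) powr (-s) \<le> q' powr (-s)"
    by (rule powr_mono2) (use assms False in \<open>auto simp: field_simps\<close>)
  moreover have "(q / a) powr (-s) = a powr s * q powr (-s)"
    using assms by (simp add: powr_divide powr_minus inverse_powr field_simps)
  ultimately show ?thesis using False by simp
qed

lemma mult_powr_neg_le_if_large:
  fixes k c t t' q :: real
  assumes k: "k > 0" and c: "c > 0" and tt: "t' < t"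
    and q: "q \<ge> max 1 ((k / c) powr (1 / (t - t')))"
  shows "k * q powr (-t) \<le> c * q powr (-t')"
proof -
  have "k / c = ((k / c) powr (1 / (t - t'))) powr (t - t')"
    using k c tt by (simp add: powr_powr)
  also have "\<dots> \<le> q powr (t - t')"
    by (rule powr_mono2) (use tt q in auto)
  finally have "k \<le> c * q powr (t - t')" using c by (simp add: field_simps)
  then have "k * q powr (-t) \<le> c * q powr (t - t') * q powr (-t)"
    by (rule mult_right_mono) simp
  also have "\<dots> = c * q powr (-t')" by (simp add: powr_add[symmetric] mult.assoc)
  finally show ?thesis .
qed

lemma infinite_good_approx_rescale:
  fixes f :: "int \<times> int \<Rightarrow> int \<times> int" and c a t t' y :: real
  assumes c: "c > 0" and a: "a \<ge> 1" and tt: "t' < t"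
    and rescale: "\<And>p q p' q'. q \<ge> 1 \<Longrightarrow> coprime p q \<Longrightarrow> P p q \<Longrightarrow> f (p, q) = (p', q') \<Longrightarrow>
      q' \<ge> 1 \<and> coprime p' q' \<and> P' p' q' \<and>
      real_of_int p' / real_of_int q' = c * (real_of_int p / real_of_int q) \<and>
      real_of_int q' \<le> a * real_of_int q \<and> real_of_int q \<le> a * real_of_int q'"
    and inf: "infinite (good_approx P y t)"
  shows "infinite (good_approx P' (c * y) t')"
proof -
  \<comment> \<open>For q \<ge> N the surplus exponent t - t' absorbs both c and the factor b lost in passing
    from q to the comparable denominator q'.\<close>
  define b where "b = a powr (-\<bar>t'\<bar>)"
  have b: "b > 0" using a by (simp add: b_def)
  define N where "N = max 1 ((c / b) powr (1 / (t - t')))"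
  define Large where "Large = {(p, q) \<in> good_approx P y t. q > \<lceil>N\<rceil>}"
  have "Large = good_approx P y t - {(p, q) \<in> good_approx P y t. q \<le> \<lceil>N\<rceil>}"
    by (auto simp: Large_def)
  then have "infinite Large"
    using Diff_infinite_finite[OF finite_good_approx_denominator_le inf] by simp
  moreover have "inj_on f Large"
  proof (rule inj_onI, clarify)
    fix p1 q1 p2 q2
    assume "(p1, q1) \<in> Large" "(p2, q2) \<in> Large" and f_eq: "f (p1, q1) = f (p2, q2)"
    then have 1: "q1 \<ge> 1" "coprime p1 q1" "P p1 q1" and 2: "q2 \<ge> 1" "coprime p2 q2" "P p2 q2"
      by (simp_all add: Large_def good_approx_def)
    obtain p' q' where f1: "f (p1, q1) = (p', q')" by (cases "f (p1, q1)")
    with f_eq have f2: "f (p2, q2) = (p', q')" by simp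
    have "c * (real_of_int p1 / q1) = c * (real_of_int p2 / q2)"
      using rescale[OF 1 f1] rescale[OF 2 f2] by simp
    with c have "real_of_int p1 / q1 = real_of_int p2 / q2"
      by (metis mult_cancel_left order_less_irrefl)
    with 1(1,2) 2(1,2) show "p1 = p2 \<and> q1 = q2" by (intro reduced_fraction_eqD)
  qed
  moreover have "f (p, q) \<in> good_approx P' (c * y) t'" if "(p, q) \<in> Large" for p q
  proof -
    from that have q: "q \<ge> 1" and cp: "coprime p q" and "P p q"
      and err: "\<bar>y - p / q\<bar> < q powr (- t)" and "q > \<lceil>N\<rceil>"
      by (simp_all add: Large_def good_approx_def)
    then have qN: "real_of_int q \<ge> N" by linarith
    obtain p' q' where f: "f (p, q) = (p', q')" by (cases "f (p, q)")
    note r = rescale[OF q cp \<open>P p q\<close> f]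
    have "\<bar>c * y - p' / q'\<bar> = c * \<bar>y - p / q\<bar>"
      using r c by (simp add: abs_mult_pos' right_diff_distrib)
    also have "\<dots> < c * q powr (- t)" using err c by simp
    also have "\<dots> \<le> b * q powr (-t')"
      by (rule mult_powr_neg_le_if_large[OF c b tt]) (use qN in \<open>simp add: N_def\<close>)
    also have "\<dots> \<le> q' powr (-t')"
      unfolding b_def by (rule powr_neg_le_of_comparable) (use q r a in auto)
    finally show ?thesis using r f by (simp add: good_approx_def)
  qed
  then have "f ` Large \<subseteq> good_approx P' (c * y) t'" by auto
  ultimately show ?thesis
    by (metis finite_imageD finite_subset)
qed

fun double_fraction :: "int \<times> int \<Rightarrow> int \<times> int" where
  "double_fraction (p, q) = (if odd q then (2 * p, q) else (p, q div 2))"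

fun halve_fraction :: "int \<times> int \<Rightarrow> int \<times> int" where
  "halve_fraction (p, q) = (if even p then (p div 2, q) else (p, 2 * q))"

lemma not_both_even_if_coprime:
  fixes a b :: int
  assumes "coprime a b"
  shows "\<not> (even a \<and> even b)"
  using assms coprime_common_divisor [of a b 2] by auto

lemma double_fraction_rescales:
  fixes p q p' q' :: int
  assumes q: "q \<ge> 1" and cp: "coprime p q" and q4: "q mod 4 \<in> {0, 1, 3}"
    and f: "double_fraction (p, q) = (p', q')"
  shows "q' \<ge> 1 \<and> coprime p' q' \<and> \<not> (odd p' \<and> odd q') \<and>
    real_of_int p' / real_of_int q' = 2 * (real_of_int p / real_of_int q) \<and>
    real_of_int q' \<le> 2 * real_of_int q \<and> real_of_int q \<le> 2 * real_of_int q'"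
proof (cases "odd q")
  case True
  with f have "p' = 2 * p" "q' = q" by auto
  with True q cp show ?thesis by simp
next
  case False
  then have "q mod 4 = 0" using q4 by (auto; presburger)
  then obtain m where m: "q = 4 * m" by auto
  with f have "p' = p" "q' = 2 * m" by auto
  moreover have "odd p" using False cp not_both_even_if_coprime by blast
  ultimately show ?thesis using m q cp by simp
qed

lemma halve_fraction_rescales:
  fixes p q p' q' :: int
  assumes q: "q \<ge> 1" and cp: "coprime p q" and not_odd: "\<not> (odd p \<and> odd q)"
    and f: "halve_fraction (p, q) = (p', q')"
  shows "q' \<ge> 1 \<and> coprime p' q' \<and> q' mod 4 \<in> {0, 1, 3} \<and>
    real_of_int p' / real_of_int q' = 1 / 2 * (real_of_int p / real_of_int q) \<and>
    real_of_int q' \<le> 2 * real_of_int q \<and> real_of_int q \<le> 2 * real_of_int q'"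
proof (cases "even p")
  case True
  then obtain m where m: "p = 2 * m" by auto
  have "odd q" using True cp not_both_even_if_coprime by blast
  then have "q mod 4 \<in> {0, 1, 3}" by simp presburger
  moreover from f m have "p' = m" "q' = q" by auto
  ultimately show ?thesis using m q cp by simp
next
  case False
  with f not_odd have "p' = p" "q' = 2 * q" "even q" by auto
  with False q cp show ?thesis by auto
qed

lemma infinite_good_approx_double:
  assumes "t' < t" "infinite (good_approx (\<lambda>p q. q mod 4 \<in> {0, 1, 3}) x t)"
  shows "infinite (good_approx (\<lambda>p q. \<not> (odd p \<and> odd q)) (2 * x) t')"
  using infinite_good_approx_rescale[where f = double_fraction and c = 2 and a = 2,
      OF _ _ assms(1) double_fraction_rescales assms(2)]
  by simp

lemma infinite_good_approx_halve:
  assumes "t' < t" "infinite (good_approx (\<lambda>p q. \<not> (odd p \<and> odd q)) (2 * x) t)"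
  shows "infinite (good_approx (\<lambda>p q. q mod 4 \<in> {0, 1, 3}) x t')"
  using infinite_good_approx_rescale[where f = halve_fraction and c = "1 / 2" and a = 2,
      OF _ _ assms(1) halve_fraction_rescales assms(2)]
  by simp

theorem lemma3p3:
  fixes x :: real
  assumes "x \<notin> \<rat>"
  shows "gamma_R x = tau_R (2 * x)"
  unfolding gamma_R_def tau_R_def
  by (intro antisym Sup_ereal_image_le_if_lower_mem)
    (use infinite_good_approx_double infinite_good_approx_halve in blast)+

end
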